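(* Let $X$ and $Y$ be $\mathbb{N}$-valued random variables with $P\{X=0\}\ne1$, $P\{Y=0\}\neq 1$ and $\mathbb{E}[X^2+Y^2]<+\infty$. Let $f_t$ be the solution of the kinetic equation with initial probability density $f_0$ on $\mathbb{N}$ with mean $m_0$ and $\mathrm{Var}(f_0)<+\infty$. Set $\alpha_1=\mathbb{E}[X]+\mathbb{E}[Y]-1$, $\alpha_2=\mathbb{E}[X]^2+\mathbb{E}[Y]^2-1$, $\beta=\mathrm{Var}(X)+\mathrm{Var}(Y)$, $\gamma=\mathbb{E}[X]\mathbb{E}[Y]$. Then for every $t>0$ $$\begin{aligned}\mathrm{Var}(f_t)={}&M_2(f_0)e^{\alpha_2t}-m_0^2e^{2\alpha_1t}+\beta m_0\Big[\frac{e^{\alpha_1t}-e^{\alpha_2t}}{\alpha_1-\alpha_2}\mathbb{I}\{\alpha_1\ne\alpha_2\}+te^{\alpha_2t}\mathbb{I}\{\alpha_1=\alpha_2\}\Big]\\&+2\gamma m_0^2\Big[\frac{e^{2\alpha_1t}-e^{\alpha_2t}}{2\alpha_1-\alpha_2}\mathbb{I}\{2\alpha_1\ne\alpha_2\}+te^{\alpha_2t}\mathbb{I}\{2\alpha_1=\alpha_2\}\Big].\end{aligned}$$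
   Context: $M_2(f)=\sum_v v^2f(v)$, $\mathrm{Var}(f)=M_2(f)-M_1(f)^2$, $\mathbb{I}$ is the indicator function. The kinetic equation is $\partial_t\hat f_t(z)=\hat f_t(\hat p_X(z))\hat f_t(\hat p_Y(z))-\hat f_t(z)$, $z\in[0,1]$, $t>0$, for $\hat f_t(z)=\sum_vz^vf_t(v)$, with $\hat p_X(z)=\mathbb{E}[z^X]$, $\hat p_Y(z)=\mathbb{E}[z^Y]$; it has a unique global solution for each initial probability density (equivalently $\partial_tf_t=Q^+(f_t,f_t)-f_t$ with $Q^+(f,g)(v)=P\{\sum_{i=1}^{V_1}Y_i+\sum_{i=1}^{V_2}X_i=v\}$, $V_1\sim f$, $V_2\sim g$, $X_i$ i.i.d. $\sim X$, $Y_i$ i.i.d. $\sim Y$, all independent). *)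

theory Defs
  imports "HOL-Probability.Probability"
begin

definition prob_density :: "(nat \<Rightarrow> real) \<Rightarrow> bool" where
  "prob_density f \<longleftrightarrow> (\<forall>v. 0 \<le> f v) \<and> f sums 1"

definition M1 :: "(nat \<Rightarrow> real) \<Rightarrow> real" where
  "M1 f = (\<Sum>v. real v * f v)"

definition M2 :: "(nat \<Rightarrow> real) \<Rightarrow> real" where
  "M2 f = (\<Sum>v. (real v)^2 * f v)"

definition Var :: "(nat \<Rightarrow> real) \<Rightarrow> real" where
  "Var f = M2 f - (M1 f)^2"

definition gen_fun :: "(nat \<Rightarrow> real) \<Rightarrow> real \<Rightarrow> real" where
  "gen_fun f z = (\<Sum>v. z ^ v * f v)"

definition pgf :: "nat pmf \<Rightarrow> real \<Rightarrow> real" where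
  "pgf p z = measure_pmf.expectation p (\<lambda>x. z ^ x)"

definition kinetic_solution :: "nat pmf \<Rightarrow> nat pmf \<Rightarrow> (nat \<Rightarrow> real) \<Rightarrow> (real \<Rightarrow> nat \<Rightarrow> real) \<Rightarrow> bool" where
  "kinetic_solution pX pY f0 f \<longleftrightarrow>
     f 0 = f0 \<and>
     (\<forall>t\<ge>0. prob_density (f t)) \<and>
     (\<forall>z\<in>{0..1}. continuous_on {0..} (\<lambda>t. gen_fun (f t) z) \<and>
        (\<forall>t>0. ((\<lambda>s. gen_fun (f s) z) has_real_derivative
                 (gen_fun (f t) (pgf pX z) * gen_fun (f t) (pgf pY z) - gen_fun (f t) z)) (at t)))"

end

theory Submission
  imports Defs
begin

text \<open>The moments of \<open>f\<^sub>t\<close> are read off its generating function \<open>\<phi>\<^sub>t\<close> near \<open>z = 1\<close> through divided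
  differences: \<open>1 - \<phi>\<^sub>t(z) = (1 - z) G\<^sub>1(z)\<close> and \<open>(1 - z) M\<^sub>1 - (1 - \<phi>\<^sub>t(z)) = (1 - z)\<^sup>2 G\<^sub>2(z)\<close>, with
  \<open>G\<^sub>1(1) = M\<^sub>1\<close> and \<open>2 G\<^sub>2(1) = M\<^sub>2 - M\<^sub>1\<close>. A priori \<open>f\<^sub>t\<close> is only a probability density, so the
  moments are first shown to be finite by comparison: the kinetic equation and
  \<open>1 - xy \<le> (1 - x) + (1 - y)\<close> bound \<open>1 - \<phi>\<^sub>t(z)\<close> by \<open>(1 - z) m\<^sub>0 e\<^bsup>(E X + E Y) t\<^esup>\<close> up to a remainder
  \<open>(2t)\<^sup>n / n!\<close> that is carried through an induction on \<open>n\<close> and then let go; the second-order gap is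
  bounded by \<open>(1 - z)\<^sup>2\<close> times an exponential in the same way. Dividing the integrated equation by
  \<open>1 - z\<close>, resp. \<open>(1 - z)\<^sup>2\<close>, and letting \<open>z \<rightarrow> 1\<close> by dominated convergence gives the closed linear
  system \<open>M\<^sub>1' = \<alpha>\<^sub>1 M\<^sub>1\<close>, \<open>M\<^sub>2' = \<alpha>\<^sub>2 M\<^sub>2 + \<beta> M\<^sub>1 + 2 \<gamma> M\<^sub>1\<^sup>2\<close>, whose solution is the variance formula.\<close>

section \<open>Divided differences of powers at 1\<close>

text \<open>\<open>pow_dq1 v w = (1 - w^v) / (1 - w)\<close> and \<open>pow_dq2 v w = ((1 - w) v - (1 - w^v)) / (1 - w)^2\<close>,
  written as polynomials so that they remain meaningful and continuous at \<open>w = 1\<close>.\<close>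

definition pow_dq1 :: "nat \<Rightarrow> real \<Rightarrow> real" where
  "pow_dq1 v w = (\<Sum>k<v. w ^ k)"

definition pow_dq2 :: "nat \<Rightarrow> real \<Rightarrow> real" where
  "pow_dq2 v w = (\<Sum>k<v. pow_dq1 k w)"

lemma one_minus_power_eq_pow_dq1: "1 - w ^ v = (1 - w) * pow_dq1 v w"
  unfolding pow_dq1_def by (rule one_diff_power_eq)

lemma pow_dq2_eq: "(1 - w)^2 * pow_dq2 v w = (1 - w) * real v - (1 - w ^ v)"
proof (induction v)
  case 0
  then show ?case by (simp add: pow_dq2_def)
next
  case (Suc v)
  have "(1 - w)^2 * pow_dq2 (Suc v) w = (1 - w)^2 * pow_dq2 v w + (1 - w) * ((1 - w) * pow_dq1 v w)"
    by (simp add: pow_dq2_def algebra_simps power2_eq_square)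
  also have "\<dots> = (1 - w) * real v - (1 - w ^ v) + (1 - w) * (1 - w ^ v)"
    by (simp only: Suc.IH one_minus_power_eq_pow_dq1)
  finally show ?case by (simp add: algebra_simps)
qed

lemma pow_dq1_at_1: "pow_dq1 v 1 = real v"
  by (simp add: pow_dq1_def)

lemma pow_dq2_at_1: "2 * pow_dq2 v 1 = (real v)^2 - real v"
  by (induction v) (auto simp: pow_dq2_def pow_dq1_at_1 algebra_simps power2_eq_square)

lemma pow_dq1_nonneg: "0 \<le> w \<Longrightarrow> 0 \<le> pow_dq1 v w"
  unfolding pow_dq1_def by (intro sum_nonneg) auto

lemma pow_dq2_nonneg: "0 \<le> w \<Longrightarrow> 0 \<le> pow_dq2 v w"
  unfolding pow_dq2_def by (intro sum_nonneg pow_dq1_nonneg)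

lemma pow_dq1_mono: "0 \<le> w \<Longrightarrow> w \<le> w' \<Longrightarrow> pow_dq1 v w \<le> pow_dq1 v w'"
  unfolding pow_dq1_def by (intro sum_mono power_mono) auto

lemma pow_dq2_mono: "0 \<le> w \<Longrightarrow> w \<le> w' \<Longrightarrow> pow_dq2 v w \<le> pow_dq2 v w'"
  unfolding pow_dq2_def by (intro sum_mono pow_dq1_mono) auto

lemma pow_dq1_le: "0 \<le> w \<Longrightarrow> w \<le> 1 \<Longrightarrow> pow_dq1 v w \<le> real v"
  using pow_dq1_mono[of w 1 v] by (simp add: pow_dq1_at_1)

lemma pow_dq2_le: "0 \<le> w \<Longrightarrow> w \<le> 1 \<Longrightarrow> pow_dq2 v w \<le> (real v)^2"
  using pow_dq2_mono[of w 1 v] pow_dq2_at_1[of v] of_nat_0_le_iff[of v] zero_le_power2[of "real v"]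
  by linarith

lemma continuous_on_pow_dq1: "continuous_on A (pow_dq1 v)"
  unfolding pow_dq1_def by (intro continuous_intros)

lemma continuous_on_pow_dq2: "continuous_on A (pow_dq2 v)"
  unfolding pow_dq2_def pow_dq1_def by (intro continuous_intros)

lemma continuous_on_suminf_dominated:
  fixes h :: "nat \<Rightarrow> real \<Rightarrow> real"
  assumes "\<And>v. continuous_on A (h v)" and "\<And>v x. x \<in> A \<Longrightarrow> \<bar>h v x\<bar> \<le> B v" and "summable B"
  shows "continuous_on A (\<lambda>x. \<Sum>v. h v x)"
proof (rule uniform_limit_theorem[where f = "\<lambda>n x. \<Sum>i<n. h i x" and F = sequentially])
  show "\<forall>\<^sub>F n in sequentially. continuous_on A (\<lambda>x. \<Sum>i<n. h i x)"
    using assms(1) by (intro always_eventually allI continuous_intros) auto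
  show "uniform_limit A (\<lambda>n x. \<Sum>i<n. h i x) (\<lambda>x. \<Sum>v. h v x) sequentially"
    by (rule Weierstrass_m_test) (use assms in auto)
qed simp

lemma partial_sum_le_at_1:
  fixes c :: "nat \<Rightarrow> real \<Rightarrow> real"
  assumes "\<And>v. isCont (c v) 1" and "\<And>z. 0 \<le> z \<Longrightarrow> z < 1 \<Longrightarrow> (\<Sum>v<N. c v z) \<le> B"
  shows "(\<Sum>v<N. c v 1) \<le> B"
proof (rule tendsto_upperbound)
  show "((\<lambda>z. \<Sum>v<N. c v z) \<longlongrightarrow> (\<Sum>v<N. c v 1)) (at_left 1)"
    using assms(1) by (intro tendsto_sum) (simp add: isCont_def filterlim_at_split)
  show "\<forall>\<^sub>F z in at_left 1. (\<Sum>v<N. c v z) \<le> B"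
    by (rule eventually_mono[OF eventually_at_left_real[of 0 1]]) (auto intro: assms(2))
qed simp

definition gen_dq1 :: "(nat \<Rightarrow> real) \<Rightarrow> real \<Rightarrow> real" where
  "gen_dq1 g w = (\<Sum>v. g v * pow_dq1 v w)"

definition gen_dq2 :: "(nat \<Rightarrow> real) \<Rightarrow> real \<Rightarrow> real" where
  "gen_dq2 g w = (\<Sum>v. g v * pow_dq2 v w)"

context
  fixes g :: "nat \<Rightarrow> real"
  assumes density: "prob_density g"
begin

lemma prob_density_nonneg: "0 \<le> g v"
  using density unfolding prob_density_def by auto

lemma prob_density_sums: "g sums 1"
  using density unfolding prob_density_def by auto

lemma summable_gen_fun: "0 \<le> w \<Longrightarrow> w \<le> 1 \<Longrightarrow> summable (\<lambda>v. w ^ v * g v)"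
  by (rule summable_comparison_test'[OF sums_summable[OF prob_density_sums], of 0])
     (auto simp: prob_density_nonneg abs_mult intro!: mult_left_le_one_le power_le_one)

lemma gen_fun_at_1: "gen_fun g 1 = 1"
  using prob_density_sums unfolding gen_fun_def by (simp add: sums_iff)

lemma one_minus_gen_fun_sums:
  "0 \<le> w \<Longrightarrow> w \<le> 1 \<Longrightarrow> (\<lambda>v. g v * (1 - w ^ v)) sums (1 - gen_fun g w)"
  using sums_diff[OF prob_density_sums summable_sums[OF summable_gen_fun]]
  unfolding gen_fun_def by (simp add: algebra_simps)

lemma gen_fun_nonneg: "0 \<le> w \<Longrightarrow> w \<le> 1 \<Longrightarrow> 0 \<le> gen_fun g w"
  unfolding gen_fun_def by (intro suminf_nonneg summable_gen_fun) (auto simp: prob_density_nonneg)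

lemma gen_fun_le_1: "0 \<le> w \<Longrightarrow> w \<le> 1 \<Longrightarrow> gen_fun g w \<le> 1"
proof -
  assume w: "0 \<le> w" "w \<le> 1"
  have "0 \<le> g v * (1 - w ^ v)" for v
    using w by (intro mult_nonneg_nonneg prob_density_nonneg) (simp add: power_le_one)
  then have "0 \<le> 1 - gen_fun g w"
    by (intro sums_le[OF _ sums_zero one_minus_gen_fun_sums[OF w]])
  then show ?thesis by simp
qed

lemma gen_fun_bounds: "0 \<le> w \<Longrightarrow> w \<le> 1 \<Longrightarrow> gen_fun g w \<in> {0..1}"
  using gen_fun_nonneg gen_fun_le_1 by auto

lemma summable_gen_dq1: "0 \<le> w \<Longrightarrow> w < 1 \<Longrightarrow> summable (\<lambda>v. g v * pow_dq1 v w)"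
  using summable_divide[OF sums_summable[OF one_minus_gen_fun_sums], of w "1 - w"]
  by (simp add: one_minus_power_eq_pow_dq1)

lemma one_minus_gen_fun_eq: "0 \<le> w \<Longrightarrow> w \<le> 1 \<Longrightarrow> 1 - gen_fun g w = (1 - w) * gen_dq1 g w"
proof (cases "w = 1")
  case False
  assume "0 \<le> w" "w \<le> 1"
  with False have "(\<lambda>v. (1 - w) * (g v * pow_dq1 v w)) sums ((1 - w) * gen_dq1 g w)"
    unfolding gen_dq1_def by (intro sums_mult summable_sums summable_gen_dq1) auto
  with one_minus_gen_fun_sums[OF \<open>0 \<le> w\<close> \<open>w \<le> 1\<close>] show ?thesis
    by (simp add: one_minus_power_eq_pow_dq1 mult_ac sums_unique2)
qed (simp add: gen_fun_at_1)

lemma M1_le_of_gen_fun_bound: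
  assumes "\<And>z. 0 \<le> z \<Longrightarrow> z < 1 \<Longrightarrow> 1 - gen_fun g z \<le> (1 - z) * B"
  shows "summable (\<lambda>v. real v * g v)" and "M1 g \<le> B"
proof -
  have partial: "(\<Sum>v<N. real v * g v) \<le> B" for N
  proof -
    have "(\<Sum>v<N. g v * pow_dq1 v 1) \<le> B"
    proof (rule partial_sum_le_at_1)
      show "isCont (\<lambda>w. g v * pow_dq1 v w) 1" for v
        unfolding pow_dq1_def by (intro continuous_intros)
      fix z :: real assume z: "0 \<le> z" "z < 1"
      have "(\<Sum>v<N. g v * pow_dq1 v z) \<le> gen_dq1 g z"
        unfolding gen_dq1_def using z
        by (intro sum_le_suminf summable_gen_dq1) (auto intro!: mult_nonneg_nonneg prob_density_nonneg pow_dq1_nonneg)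
      also have "\<dots> \<le> B"
        using assms[OF z] one_minus_gen_fun_eq[of z] z by (simp add: mult_le_cancel_left_pos)
      finally show "(\<Sum>v<N. g v * pow_dq1 v z) \<le> B" .
    qed
    then show ?thesis by (simp add: pow_dq1_at_1 mult.commute)
  qed
  show summable: "summable (\<lambda>v. real v * g v)"
    by (rule summableI_nonneg_bounded[OF _ partial]) (simp add: prob_density_nonneg)
  show "M1 g \<le> B"
    unfolding M1_def by (rule suminf_le_const[OF summable partial])
qed

lemma summable_first_moment:
  assumes "summable (\<lambda>v. (real v)^2 * g v)"
  shows "summable (\<lambda>v. real v * g v)"
proof (rule summable_comparison_test'[OF assms, of 0])
  fix v :: nat
  have "real v \<le> (real v)^2" by (cases v) (auto simp: power2_eq_square)
  then show "norm (real v * g v) \<le> (real v)^2 * g v"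
    by (simp add: abs_mult prob_density_nonneg mult_right_mono)
qed

lemma density_pow_dq1_le: "0 \<le> w \<Longrightarrow> w \<le> 1 \<Longrightarrow> g v * pow_dq1 v w \<le> real v * g v"
  using mult_left_mono[OF pow_dq1_le prob_density_nonneg] by (simp add: mult.commute)

lemma density_pow_dq2_le: "0 \<le> w \<Longrightarrow> w \<le> 1 \<Longrightarrow> g v * pow_dq2 v w \<le> (real v)^2 * g v"
  using mult_left_mono[OF pow_dq2_le prob_density_nonneg] by (simp add: mult.commute)

lemma square_moment_term_split: "(real v)^2 * g v = 2 * (g v * pow_dq2 v 1) + real v * g v"
proof -
  have "(real v)^2 = 2 * pow_dq2 v 1 + real v" using pow_dq2_at_1[of v] by simp
  then have "(real v)^2 * g v = (2 * pow_dq2 v 1 + real v) * g v" by (simp only:)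
  then show ?thesis by (simp add: algebra_simps)
qed

context
  assumes first_moment: "summable (\<lambda>v. real v * g v)"
begin

lemma M1_nonneg: "0 \<le> M1 g"
  unfolding M1_def by (intro suminf_nonneg first_moment) (simp add: prob_density_nonneg)

lemma summable_gen_dq1_closed: "0 \<le> w \<Longrightarrow> w \<le> 1 \<Longrightarrow> summable (\<lambda>v. g v * pow_dq1 v w)"
  by (rule summable_comparison_test'[OF first_moment, of 0])
     (auto simp: abs_mult prob_density_nonneg pow_dq1_nonneg intro!: density_pow_dq1_le)

lemma gen_dq1_at_1: "gen_dq1 g 1 = M1 g"
  unfolding gen_dq1_def M1_def by (simp add: pow_dq1_at_1 mult.commute)

lemma gen_dq1_nonneg: "0 \<le> w \<Longrightarrow> w \<le> 1 \<Longrightarrow> 0 \<le> gen_dq1 g w"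
  unfolding gen_dq1_def
  by (intro suminf_nonneg summable_gen_dq1_closed) (auto intro!: mult_nonneg_nonneg prob_density_nonneg pow_dq1_nonneg)

lemma gen_dq1_le_M1: "0 \<le> w \<Longrightarrow> w \<le> 1 \<Longrightarrow> gen_dq1 g w \<le> M1 g"
  unfolding gen_dq1_def M1_def
  by (intro suminf_le summable_gen_dq1_closed first_moment)
     (auto intro!: density_pow_dq1_le)

lemma continuous_on_gen_dq1: "continuous_on {0..1} (gen_dq1 g)"
  unfolding gen_dq1_def
  by (rule continuous_on_suminf_dominated[OF _ _ first_moment])
     (auto intro!: continuous_intros continuous_on_pow_dq1 density_pow_dq1_le
           simp: abs_mult prob_density_nonneg pow_dq1_nonneg)

lemma tendsto_gen_dq1_at_1:
  "(\<And>n. x n \<in> {0..1}) \<Longrightarrow> x \<longlonglongrightarrow> 1 \<Longrightarrow> (\<lambda>n. gen_dq1 g (x n)) \<longlonglongrightarrow> M1 g"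
  using continuous_on_tendsto_compose[OF continuous_on_gen_dq1, of x 1 sequentially]
  by (simp add: gen_dq1_at_1)

lemma tendsto_gen_fun_at_1:
  assumes "\<And>n. x n \<in> {0..1}" "x \<longlonglongrightarrow> 1"
  shows "(\<lambda>n. gen_fun g (x n)) \<longlonglongrightarrow> 1"
proof -
  have "(\<lambda>n. 1 - (1 - x n) * gen_dq1 g (x n)) \<longlonglongrightarrow> 1 - (1 - 1) * M1 g"
    by (intro tendsto_intros tendsto_gen_dq1_at_1 assms)
  moreover have "1 - (1 - x n) * gen_dq1 g (x n) = gen_fun g (x n)" for n
    using one_minus_gen_fun_eq[of "x n"] assms(1)[of n] by simp
  ultimately show ?thesis by simp
qed

lemma one_minus_gen_fun_le: "0 \<le> w \<Longrightarrow> w \<le> 1 \<Longrightarrow> 1 - gen_fun g w \<le> (1 - w) * M1 g"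
  using one_minus_gen_fun_eq gen_dq1_le_M1 by (auto intro: mult_left_mono)

lemma gen_dq2_sums:
  assumes "0 \<le> w" "w < 1"
  shows "(\<lambda>v. g v * pow_dq2 v w) sums (((1 - w) * M1 g - (1 - gen_fun g w)) / (1 - w)^2)"
proof -
  have "(\<lambda>v. (real v * g v * (1 - w) - g v * (1 - w ^ v)) / (1 - w)^2)
          sums ((M1 g * (1 - w) - (1 - gen_fun g w)) / (1 - w)^2)"
    unfolding M1_def using assms
    by (intro sums_divide sums_diff sums_mult2 summable_sums first_moment one_minus_gen_fun_sums) auto
  moreover have "(real v * g v * (1 - w) - g v * (1 - w ^ v)) / (1 - w)^2 = g v * pow_dq2 v w" for v
  proof -
    have "g v * ((1 - w)^2 * pow_dq2 v w) = g v * ((1 - w) * real v - (1 - w ^ v))"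
      by (simp only: pow_dq2_eq)
    then have "real v * g v * (1 - w) - g v * (1 - w ^ v) = g v * pow_dq2 v w * (1 - w)^2"
      by (simp add: algebra_simps)
    then show ?thesis using assms by simp
  qed
  ultimately show ?thesis by (simp add: mult.commute)
qed

lemma second_order_gen_fun_eq:
  "0 \<le> w \<Longrightarrow> w \<le> 1 \<Longrightarrow> (1 - w) * M1 g - (1 - gen_fun g w) = (1 - w)^2 * gen_dq2 g w"
  using gen_dq2_sums[of w] gen_fun_at_1 unfolding gen_dq2_def
  by (cases "w = 1") (auto simp: sums_iff)

lemma M2_le_of_gen_fun_bound:
  assumes "\<And>z. 0 \<le> z \<Longrightarrow> z < 1 \<Longrightarrow> (1 - z) * M1 g - (1 - gen_fun g z) \<le> (1 - z)^2 * B"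
  shows "summable (\<lambda>v. (real v)^2 * g v)" and "M2 g - M1 g \<le> 2 * B"
proof -
  have partial_dq2: "(\<Sum>v<N. g v * pow_dq2 v 1) \<le> B" for N
  proof (rule partial_sum_le_at_1)
    fix z :: real assume z: "0 \<le> z" "z < 1"
    have "(\<Sum>v<N. g v * pow_dq2 v z) \<le> (\<Sum>v. g v * pow_dq2 v z)"
      using z by (intro sum_le_suminf sums_summable[OF gen_dq2_sums])
                 (auto intro!: mult_nonneg_nonneg prob_density_nonneg pow_dq2_nonneg)
    also have "\<dots> = ((1 - z) * M1 g - (1 - gen_fun g z)) / (1 - z)^2"
      using gen_dq2_sums[OF z] by (simp add: sums_iff)
    also have "\<dots> \<le> B"
      using assms[OF z] z by (simp add: pos_divide_le_eq mult.commute)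
    finally show "(\<Sum>v<N. g v * pow_dq2 v z) \<le> B" .
  qed (unfold pow_dq2_def pow_dq1_def, intro continuous_intros)
  have partial: "(\<Sum>v<N. (real v)^2 * g v) \<le> 2 * B + M1 g" for N
  proof -
    have "(\<Sum>v<N. real v * g v) \<le> M1 g"
      unfolding M1_def by (intro sum_le_suminf first_moment) (auto intro!: mult_nonneg_nonneg prob_density_nonneg)
    with partial_dq2[of N] show ?thesis
      by (simp add: square_moment_term_split sum.distrib sum_distrib_left[symmetric])
  qed
  show summable: "summable (\<lambda>v. (real v)^2 * g v)"
    by (rule summableI_nonneg_bounded[OF _ partial]) (simp add: prob_density_nonneg)
  have "M2 g \<le> 2 * B + M1 g"
    unfolding M2_def by (rule suminf_le_const[OF summable partial])
  then show "M2 g - M1 g \<le> 2 * B" by simp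
qed

end

context
  assumes second_moment: "summable (\<lambda>v. (real v)^2 * g v)"
begin

lemma summable_gen_dq2_closed: "0 \<le> w \<Longrightarrow> w \<le> 1 \<Longrightarrow> summable (\<lambda>v. g v * pow_dq2 v w)"
  by (rule summable_comparison_test'[OF second_moment, of 0])
     (auto simp: abs_mult prob_density_nonneg pow_dq2_nonneg intro!: density_pow_dq2_le)

lemma gen_dq2_at_1: "2 * gen_dq2 g 1 = M2 g - M1 g"
proof -
  have "(\<lambda>v. ((real v)^2 * g v - real v * g v) / 2) sums ((M2 g - M1 g) / 2)"
    unfolding M2_def M1_def
    by (intro sums_divide sums_diff summable_sums second_moment summable_first_moment)
  moreover have "((real v)^2 * g v - real v * g v) / 2 = g v * pow_dq2 v 1" for v
    using square_moment_term_split[of v] by simp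
  ultimately show ?thesis unfolding gen_dq2_def by (simp add: sums_iff)
qed

lemma continuous_on_gen_dq2: "continuous_on {0..1} (gen_dq2 g)"
  unfolding gen_dq2_def
  by (rule continuous_on_suminf_dominated[OF _ _ second_moment])
     (auto intro!: continuous_intros continuous_on_pow_dq2 density_pow_dq2_le
           simp: abs_mult prob_density_nonneg pow_dq2_nonneg)

lemma tendsto_gen_dq2_at_1:
  "(\<And>n. x n \<in> {0..1}) \<Longrightarrow> x \<longlonglongrightarrow> 1 \<Longrightarrow> (\<lambda>n. gen_dq2 g (x n)) \<longlonglongrightarrow> gen_dq2 g 1"
  using continuous_on_tendsto_compose[OF continuous_on_gen_dq2, of x 1 sequentially] by simp

lemma gen_dq2_nonneg: "0 \<le> w \<Longrightarrow> w \<le> 1 \<Longrightarrow> 0 \<le> gen_dq2 g w"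
  unfolding gen_dq2_def
  by (intro suminf_nonneg summable_gen_dq2_closed) (auto intro!: mult_nonneg_nonneg prob_density_nonneg pow_dq2_nonneg)

lemma gen_dq2_le: "0 \<le> w \<Longrightarrow> w \<le> 1 \<Longrightarrow> gen_dq2 g w \<le> gen_dq2 g 1"
  unfolding gen_dq2_def
  by (intro suminf_le summable_gen_dq2_closed) (auto intro!: mult_left_mono pow_dq2_mono prob_density_nonneg)

end

end

lemma integrable_pmf_iff_summable:
  fixes p :: "nat pmf" and h :: "nat \<Rightarrow> real"
  shows "integrable (measure_pmf p) h \<longleftrightarrow> summable (\<lambda>x. norm (pmf p x * h x))"
  unfolding measure_pmf_eq_density
  by (subst integrable_density) (auto simp: integrable_count_space_nat_iff)

lemma expectation_pmf_eq_suminf: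
  fixes p :: "nat pmf" and h :: "nat \<Rightarrow> real"
  assumes "integrable (measure_pmf p) h"
  shows "measure_pmf.expectation p h = (\<Sum>x. pmf p x * h x)"
proof -
  have "integrable (count_space UNIV) (\<lambda>x. pmf p x * h x)"
    using assms unfolding measure_pmf_eq_density by (subst (asm) integrable_density) auto
  moreover have "measure_pmf.expectation p h = integral\<^sup>L (count_space UNIV) (\<lambda>x. pmf p x * h x)"
    unfolding measure_pmf_eq_density by (subst integral_density) auto
  ultimately show ?thesis by (simp add: integral_count_space_nat)
qed

lemma prob_density_pmf: "prob_density (pmf (p :: nat pmf))"
proof -
  have "measure_pmf.expectation p (\<lambda>x. 1::real) = (\<Sum>x. pmf p x * 1)"
    by (rule expectation_pmf_eq_suminf) simp
  moreover have "summable (\<lambda>x. pmf p x * 1)"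
    using integrable_pmf_iff_summable[of p "\<lambda>x. 1"] by simp
  ultimately show ?thesis
    unfolding prob_density_def by (simp add: sums_iff)
qed

context
  fixes p :: "nat pmf"
  assumes square_integrable: "integrable (measure_pmf p) (\<lambda>x. (real x)^2)"
begin

lemma summable_pmf_second_moment: "summable (\<lambda>v. (real v)^2 * pmf p v)"
  using square_integrable unfolding integrable_pmf_iff_summable by (simp add: mult.commute)

lemma summable_pmf_first_moment: "summable (\<lambda>v. real v * pmf p v)"
  by (rule summable_first_moment[OF prob_density_pmf summable_pmf_second_moment])

lemma expectation_eq_M1: "measure_pmf.expectation p real = M1 (pmf p)"
proof -
  have "integrable (measure_pmf p) real"
    unfolding integrable_pmf_iff_summable using summable_pmf_first_moment by (simp add: mult.commute)
  then show ?thesis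
    unfolding M1_def by (simp add: expectation_pmf_eq_suminf mult.commute)
qed

lemma variance_eq_M2_minus_M1: "measure_pmf.variance p real = M2 (pmf p) - (M1 (pmf p))^2"
proof -
  have "integrable (measure_pmf p) real"
    unfolding integrable_pmf_iff_summable using summable_pmf_first_moment by (simp add: mult.commute)
  moreover have "measure_pmf.expectation p (\<lambda>x. (real x)^2) = M2 (pmf p)"
    unfolding M2_def expectation_pmf_eq_suminf[OF square_integrable] by (simp add: mult.commute)
  ultimately show ?thesis
    using measure_pmf.variance_eq[OF _ square_integrable] expectation_eq_M1 by simp
qed

end

lemma pgf_eq_gen_fun: "0 \<le> z \<Longrightarrow> z \<le> 1 \<Longrightarrow> pgf p z = gen_fun (pmf p) z"
  unfolding pgf_def gen_fun_def
  by (subst expectation_pmf_eq_suminf)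
     (use summable_gen_fun[OF prob_density_pmf, of z p] in
       \<open>auto simp: integrable_pmf_iff_summable abs_mult mult.commute\<close>)

section \<open>Linear integral equations\<close>

context
  fixes c y_init :: real and y h :: "real \<Rightarrow> real"
  assumes integral_eq: "\<And>t. 0 \<le> t \<Longrightarrow> ((\<lambda>s. c * y s + h s) has_integral (y t - y_init)) {0..t}"
    and continuous_h: "continuous_on {0..} h"
begin

lemma integral_equation_eq: "0 \<le> t \<Longrightarrow> y t = y_init + integral {0..t} (\<lambda>s. c * y s + h s)"
  using integral_unique[OF integral_eq[of t]] by simp

lemma integral_equation_continuous: "continuous_on {0..T} y"
proof (cases "0 \<le> T")
  case True
  have "continuous_on {0..T} (\<lambda>t. y_init + integral {0..t} (\<lambda>s. c * y s + h s))"
    by (intro continuous_intros indefinite_integral_continuous_1 has_integral_integrable[OF integral_eq[OF True]])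
  then show ?thesis
    by (rule continuous_on_eq) (simp add: integral_equation_eq)
qed simp

lemma integral_equation_has_derivative:
  assumes "0 < x"
  shows "(y has_real_derivative c * y x + h x) (at x)"
proof -
  let ?T = "x + 1"
  have "continuous_on {0..?T} (\<lambda>s. c * y s + h s)"
    by (intro continuous_intros integral_equation_continuous continuous_on_subset[OF continuous_h]) auto
  then have "((\<lambda>u. integral {0..u} (\<lambda>s. c * y s + h s)) has_vector_derivative c * y x + h x) (at x within {0..?T})"
    by (rule integral_has_vector_derivative) (use assms in auto)
  then have "((\<lambda>u. y_init + integral {0..u} (\<lambda>s. c * y s + h s)) has_vector_derivative c * y x + h x) (at x)"
    using at_within_Icc_at[of 0 x ?T] assms by (auto intro!: derivative_eq_intros)
  then have "(y has_vector_derivative c * y x + h x) (at x)"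
    by (rule has_vector_derivative_transform_within_open[where S = "{0<..}"])
       (use assms in \<open>auto simp: integral_equation_eq\<close>)
  then show ?thesis by (simp add: has_real_derivative_iff_has_vector_derivative)
qed

lemma integral_equation_unique:
  assumes w_deriv: "\<And>t. 0 < t \<Longrightarrow> (w has_real_derivative c * w t + h t) (at t)"
    and continuous_w: "continuous_on {0..} w" and "w 0 = y_init" and "0 \<le> T"
  shows "y T = w T"
proof -
  define D where "D t = (y t - w t) * exp (- c * t)" for t
  have "D T = D 0"
  proof (cases "T = 0")
    case False
    with \<open>0 \<le> T\<close> have "0 < T" by simp
    show ?thesis
    proof (rule DERIV_isconst_end[OF \<open>0 < T\<close>])
      show "continuous_on {0..T} D"
        unfolding D_def
        by (intro continuous_intros integral_equation_continuous continuous_on_subset[OF continuous_w]) auto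
      fix x assume "0 < x" "x < T"
      then have "(D has_real_derivative ((c * y x + h x) - (c * w x + h x)) * exp (- c * x)
                   + (y x - w x) * (exp (- c * x) * - c)) (at x)"
        unfolding D_def by (auto intro!: derivative_eq_intros integral_equation_has_derivative w_deriv)
      then show "(D has_real_derivative 0) (at x)" by (simp add: algebra_simps)
    qed
  qed simp
  moreover have "y 0 = y_init" using integral_equation_eq[of 0] by simp
  ultimately show ?thesis
    unfolding D_def using \<open>w 0 = y_init\<close> by simp
qed

end

lemma has_integral_bounded_limit:
  fixes k :: "nat \<Rightarrow> real \<Rightarrow> real"
  assumes "\<And>n. (k n has_integral I n) {0..t}"
    and "\<And>n s. s \<in> {0..t} \<Longrightarrow> \<bar>k n s\<bar> \<le> C"
    and "\<And>s. s \<in> {0..t} \<Longrightarrow> (\<lambda>n. k n s) \<longlonglongrightarrow> h s"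
    and "I \<longlonglongrightarrow> J"
  shows "(h has_integral J) {0..t}"
  by (rule has_integral_dominated_convergence[where h = "\<lambda>_. C"]) (use assms in auto)

definition exp_term :: "nat \<Rightarrow> real \<Rightarrow> real" where
  "exp_term n x = x ^ n / fact n"

lemma continuous_on_exp_term [continuous_intros]:
  "continuous_on S g \<Longrightarrow> continuous_on S (\<lambda>x. exp_term n (g x))"
  unfolding exp_term_def by (intro continuous_intros) auto

lemma exp_term_tendsto_0: "(\<lambda>n. exp_term n x) \<longlonglongrightarrow> 0"
  using summable_LIMSEQ_zero[OF summable_exp[of x]] unfolding exp_term_def by (simp add: divide_inverse mult.commute)

lemma le_of_le_plus_exp_term:
  fixes a b C x :: real
  assumes "\<And>n. a \<le> b + C * exp_term n x"
  shows "a \<le> b"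
proof -
  have "(\<lambda>n. b + C * exp_term n x) \<longlonglongrightarrow> b + C * 0"
    by (intro tendsto_intros exp_term_tendsto_0)
  then show ?thesis
    using LIMSEQ_le_const[of _ "b + C * 0" a] assms by simp
qed

lemma exp_term_Suc_has_derivative [derivative_intros]:
  assumes "(g has_real_derivative g') (at u within S)"
  shows "((\<lambda>x. exp_term (Suc n) (g x)) has_real_derivative exp_term n (g u) * g') (at u within S)"
proof -
  have "((\<lambda>x. g x ^ Suc n / fact (Suc n)) has_real_derivative
          (1 + real n) * (g' * g u ^ n) / fact (Suc n)) (at u within S)"
    by (intro DERIV_cdivide DERIV_power_Suc assms)
  moreover have "(1 + real n) * (g' * g u ^ n) / fact (Suc n) = g u ^ n / fact n * g'"
    by (simp add: fact_Suc divide_simps del: of_nat_Suc)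
  ultimately show ?thesis
    unfolding exp_term_def by (simp only:)
qed

text \<open>The divided difference of \<open>p \<mapsto> exp (p t)\<close> at \<open>p\<close> and \<open>q\<close>, written exactly as the bracketed
  factors of the variance formula.\<close>

definition exp_dd :: "real \<Rightarrow> real \<Rightarrow> real \<Rightarrow> real" where
  "exp_dd p q t = (if p \<noteq> q then (exp (p * t) - exp (q * t)) / (p - q) else 0)
                 + (if p = q then t * exp (q * t) else 0)"

lemma exp_dd_has_derivative: "(exp_dd p q has_real_derivative q * exp_dd p q t + exp (p * t)) (at t)"
proof (cases "p = q")
  case True
  then have "exp_dd p q = (\<lambda>t. t * exp (q * t))" unfolding exp_dd_def by auto
  moreover have "((\<lambda>t. t * exp (q * t)) has_real_derivative 1 * exp (q * t) + t * (exp (q * t) * q)) (at t)"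
    by (auto intro!: derivative_eq_intros)
  ultimately show ?thesis using True by (simp add: algebra_simps)
next
  case False
  then have "exp_dd p q = (\<lambda>t. (exp (p * t) - exp (q * t)) / (p - q))" unfolding exp_dd_def by auto
  moreover have "((\<lambda>t. (exp (p * t) - exp (q * t)) / (p - q)) has_real_derivative
                   (exp (p * t) * p - exp (q * t) * q) / (p - q)) (at t)"
    using False by (auto intro!: derivative_eq_intros)
  moreover have "(exp (p * t) * p - exp (q * t) * q) / (p - q) = q * ((exp (p * t) - exp (q * t)) / (p - q)) + exp (p * t)"
    using False by (simp add: field_simps)
  ultimately show ?thesis by simp
qed

lemma continuous_on_exp_dd: "continuous_on S (exp_dd p q)"
  using exp_dd_has_derivative
  by (intro continuous_at_imp_continuous_on ballI DERIV_isCont) blast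

lemma exp_dd_0: "exp_dd p q 0 = 0"
  unfolding exp_dd_def by simp

lemma product_deficit_le: "(x::real) \<le> 1 \<Longrightarrow> y \<le> 1 \<Longrightarrow> 1 - x * y \<le> (1 - x) + (1 - y)"
  using mult_nonneg_nonneg[of "1 - x" "1 - y"] by (simp add: algebra_simps)

definition z_seq :: "nat \<Rightarrow> real" where
  "z_seq n = 1 - 1 / (real n + 2)"

lemma z_seq_bounds: "0 \<le> z_seq n" "z_seq n < 1" "z_seq n \<in> {0..1}"
  unfolding z_seq_def by (auto simp: field_simps)

lemma z_seq_tendsto: "z_seq \<longlonglongrightarrow> 1"
proof -
  have "(\<lambda>n. 1 / (real n + 2)) \<longlonglongrightarrow> 0"
    using LIMSEQ_ignore_initial_segment[OF lim_const_over_n[of 1], of 2] by (simp add: add.commute)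
  from tendsto_diff[OF tendsto_const this] show ?thesis
    unfolding z_seq_def by simp
qed

section \<open>Moments of a solution of the kinetic equation\<close>

locale kinetic =
  fixes pX pY :: "nat pmf" and f0 :: "nat \<Rightarrow> real" and f :: "real \<Rightarrow> nat \<Rightarrow> real"
  assumes X_square_integrable: "integrable (measure_pmf pX) (\<lambda>x. (real x)^2)"
    and Y_square_integrable: "integrable (measure_pmf pY) (\<lambda>x. (real x)^2)"
    and density_f0: "prob_density f0"
    and f0_second_moment: "summable (\<lambda>v. (real v)^2 * f0 v)"
    and solution: "kinetic_solution pX pY f0 f"
begin

abbreviation "mX \<equiv> M1 (pmf pX)"
abbreviation "mY \<equiv> M1 (pmf pY)"
abbreviation "m0 \<equiv> M1 f0"
abbreviation "alpha1 \<equiv> mX + mY - 1"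
abbreviation "alpha2 \<equiv> mX^2 + mY^2 - 1"
abbreviation "pX_hat \<equiv> gen_fun (pmf pX)"
abbreviation "pY_hat \<equiv> gen_fun (pmf pY)"
abbreviation f_hat :: "real \<Rightarrow> real \<Rightarrow> real" where "f_hat s \<equiv> gen_fun (f s)"

lemma pX_first_moment: "summable (\<lambda>v. real v * pmf pX v)"
  by (rule summable_pmf_first_moment[OF X_square_integrable])

lemma pY_first_moment: "summable (\<lambda>v. real v * pmf pY v)"
  by (rule summable_pmf_first_moment[OF Y_square_integrable])

lemma pX_second_moment: "summable (\<lambda>v. (real v)^2 * pmf pX v)"
  by (rule summable_pmf_second_moment[OF X_square_integrable])

lemma pY_second_moment: "summable (\<lambda>v. (real v)^2 * pmf pY v)"
  by (rule summable_pmf_second_moment[OF Y_square_integrable])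

lemma f0_first_moment: "summable (\<lambda>v. real v * f0 v)"
  by (rule summable_first_moment[OF density_f0 f0_second_moment])

lemma means_nonneg: "0 \<le> mX" "0 \<le> mY" "0 \<le> m0"
  using M1_nonneg[OF prob_density_pmf pX_first_moment] M1_nonneg[OF prob_density_pmf pY_first_moment]
    M1_nonneg[OF density_f0 f0_first_moment] by auto

lemma f_at_0: "f 0 = f0"
  using solution unfolding kinetic_solution_def by simp

lemma density_f: "0 \<le> s \<Longrightarrow> prob_density (f s)"
  using solution unfolding kinetic_solution_def by simp

lemma continuous_on_f_hat: "0 \<le> z \<Longrightarrow> z \<le> 1 \<Longrightarrow> continuous_on {0..} (\<lambda>s. f_hat s z)"
  using solution unfolding kinetic_solution_def by simp

lemma f_hat_has_derivative:
  "0 \<le> z \<Longrightarrow> z \<le> 1 \<Longrightarrow> 0 < t \<Longrightarrow>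
     ((\<lambda>s. f_hat s z) has_real_derivative f_hat t (pX_hat z) * f_hat t (pY_hat z) - f_hat t z) (at t)"
  using solution unfolding kinetic_solution_def by (simp add: pgf_eq_gen_fun)

lemma f_hat_integral:
  assumes "0 \<le> z" "z \<le> 1" "0 \<le> t"
  shows "((\<lambda>s. f_hat s (pX_hat z) * f_hat s (pY_hat z) - f_hat s z) has_integral (f_hat t z - f_hat 0 z)) {0..t}"
proof (rule fundamental_theorem_of_calculus_interior[OF \<open>0 \<le> t\<close>])
  show "continuous_on {0..t} (\<lambda>s. f_hat s z)"
    by (rule continuous_on_subset[OF continuous_on_f_hat[OF assms(1,2)]]) auto
qed (use f_hat_has_derivative[OF assms(1,2)] in \<open>auto simp: has_real_derivative_iff_has_vector_derivative\<close>)

lemma hat_bounds: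
  assumes "0 \<le> z" "z \<le> 1"
  shows "pX_hat z \<in> {0..1}" "pY_hat z \<in> {0..1}"
    and "1 - pX_hat z \<le> (1 - z) * mX" "1 - pY_hat z \<le> (1 - z) * mY"
  using gen_fun_bounds[OF prob_density_pmf assms] assms
    one_minus_gen_fun_le[OF prob_density_pmf pX_first_moment] one_minus_gen_fun_le[OF prob_density_pmf pY_first_moment]
  by auto

subsection \<open>The first moment\<close>

text \<open>The derivative of the remainder \<open>exp_term (Suc n) (2 s)\<close> is \<open>2 exp_term n (2 s)\<close>, which absorbs the
  two remainders that the induction hypothesis leaves at \<open>pX_hat z\<close> and \<open>pY_hat z\<close>.\<close>

lemma one_minus_f_hat_le_with_remainder:
  "0 \<le> s \<Longrightarrow> 0 \<le> z \<Longrightarrow> z \<le> 1 \<Longrightarrow>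
     1 - f_hat s z \<le> (1 - z) * (m0 * exp ((mX + mY) * s)) + exp_term n (2 * s)"
proof (induction n arbitrary: s z)
  case 0
  then have "0 \<le> (1 - z) * (m0 * exp ((mX + mY) * s))" "0 \<le> f_hat s z"
    using gen_fun_bounds[OF density_f] means_nonneg by auto
  then show ?case by (simp add: exp_term_def)
next
  case (Suc n)
  define d where "d u = (1 - z) * (m0 * exp ((mX + mY) * u)) + exp_term (Suc n) (2 * u) - (1 - f_hat u z)" for u
  have "d 0 \<le> d s"
  proof (rule DERIV_nonneg_imp_increasing_open[OF \<open>0 \<le> s\<close>])
    show "continuous_on {0..s} d"
      unfolding d_def by (intro continuous_intros continuous_on_subset[OF continuous_on_f_hat]) (use Suc.prems in auto)
    fix u assume u: "0 < u" "u < s"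
    let ?a = "pX_hat z" and ?b = "pY_hat z"
    have "(d has_real_derivative (1 - z) * (m0 * (exp ((mX + mY) * u) * (mX + mY))) + exp_term n (2 * u) * 2
            + (f_hat u ?a * f_hat u ?b - f_hat u z)) (at u)"
      unfolding d_def using Suc.prems u
      by (auto intro!: derivative_eq_intros f_hat_has_derivative)
    moreover have "1 - f_hat u ?a \<le> (1 - z) * mX * (m0 * exp ((mX + mY) * u)) + exp_term n (2 * u)"
      using Suc.IH[of u ?a] hat_bounds[OF Suc.prems(2,3)] u means_nonneg
        mult_right_mono[OF hat_bounds(3)[OF Suc.prems(2,3)], of "m0 * exp ((mX + mY) * u)"] by auto
    moreover have "1 - f_hat u ?b \<le> (1 - z) * mY * (m0 * exp ((mX + mY) * u)) + exp_term n (2 * u)"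
      using Suc.IH[of u ?b] hat_bounds[OF Suc.prems(2,3)] u means_nonneg
        mult_right_mono[OF hat_bounds(4)[OF Suc.prems(2,3)], of "m0 * exp ((mX + mY) * u)"] by auto
    moreover have "1 - f_hat u ?a * f_hat u ?b \<le> (1 - f_hat u ?a) + (1 - f_hat u ?b)"
      using gen_fun_bounds[OF density_f] hat_bounds[OF Suc.prems(2,3)] u by (intro product_deficit_le) auto
    moreover have "f_hat u z \<le> 1"
      using gen_fun_bounds[OF density_f] Suc.prems u by auto
    ultimately show "\<exists>d'. (d has_real_derivative d') (at u) \<and> 0 \<le> d'"
      by (intro exI conjI) (auto simp: algebra_simps)
  qed
  moreover have "0 \<le> d 0"
    using one_minus_gen_fun_le[OF density_f0 f0_first_moment] Suc.prems unfolding d_def f_at_0 by (simp add: exp_term_def)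
  ultimately show ?case
    unfolding d_def by simp
qed

lemma one_minus_f_hat_le:
  assumes "0 \<le> s" "0 \<le> z" "z \<le> 1"
  shows "1 - f_hat s z \<le> (1 - z) * (m0 * exp ((mX + mY) * s))"
  by (rule le_of_le_plus_exp_term[of _ _ 1 "2 * s"])
     (simp only: mult_1 one_minus_f_hat_le_with_remainder[OF assms])

lemma f_first_moment: "0 \<le> s \<Longrightarrow> summable (\<lambda>v. real v * f s v)"
  by (rule M1_le_of_gen_fun_bound(1)[OF density_f]) (auto intro: one_minus_f_hat_le)

lemma M1_f_le: "0 \<le> s \<Longrightarrow> M1 (f s) \<le> m0 * exp ((mX + mY) * s)"
  by (rule M1_le_of_gen_fun_bound(2)[OF density_f]) (auto intro: one_minus_f_hat_le)

definition mean_bound :: "real \<Rightarrow> real" where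
  "mean_bound T = m0 * exp ((mX + mY) * T)"

lemma mean_bound_nonneg: "0 \<le> mean_bound T"
  unfolding mean_bound_def using means_nonneg by simp

lemma M1_f_le_mean_bound:
  assumes "0 \<le> s" "s \<le> T"
  shows "M1 (f s) \<le> mean_bound T"
proof -
  have "exp ((mX + mY) * s) \<le> exp ((mX + mY) * T)"
    using assms means_nonneg by (simp add: mult_left_mono)
  with M1_f_le[OF assms(1)] means_nonneg show ?thesis
    unfolding mean_bound_def by (meson mult_left_mono order_trans)
qed

lemma one_minus_f_hat_eq:
  "0 \<le> s \<Longrightarrow> 0 \<le> w \<Longrightarrow> w \<le> 1 \<Longrightarrow> 1 - f_hat s w = (1 - w) * gen_dq1 (f s) w"
  by (rule one_minus_gen_fun_eq[OF density_f])

lemma gen_dq1_f_bounds: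
  "0 \<le> s \<Longrightarrow> w \<in> {0..1} \<Longrightarrow> 0 \<le> gen_dq1 (f s) w \<and> gen_dq1 (f s) w \<le> M1 (f s)"
  using gen_dq1_nonneg[OF density_f f_first_moment] gen_dq1_le_M1[OF density_f f_first_moment] by auto

lemma gen_dq1_pmf_bounds:
  assumes "0 \<le> z" "z \<le> 1"
  shows "0 \<le> gen_dq1 (pmf pX) z" "gen_dq1 (pmf pX) z \<le> mX"
    and "0 \<le> gen_dq1 (pmf pY) z" "gen_dq1 (pmf pY) z \<le> mY"
  using gen_dq1_nonneg[OF prob_density_pmf pX_first_moment] gen_dq1_le_M1[OF prob_density_pmf pX_first_moment]
    gen_dq1_nonneg[OF prob_density_pmf pY_first_moment] gen_dq1_le_M1[OF prob_density_pmf pY_first_moment]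
    assms by auto

lemma one_minus_hat_eq:
  assumes "0 \<le> z" "z \<le> 1"
  shows "1 - pX_hat z = (1 - z) * gen_dq1 (pmf pX) z" "1 - pY_hat z = (1 - z) * gen_dq1 (pmf pY) z"
  using one_minus_gen_fun_eq[OF prob_density_pmf] assms by auto

lemma tendsto_hat_z_seq: "(\<lambda>n. pX_hat (z_seq n)) \<longlonglongrightarrow> 1" "(\<lambda>n. pY_hat (z_seq n)) \<longlonglongrightarrow> 1"
  using tendsto_gen_fun_at_1[OF prob_density_pmf pX_first_moment z_seq_bounds(3) z_seq_tendsto]
    tendsto_gen_fun_at_1[OF prob_density_pmf pY_first_moment z_seq_bounds(3) z_seq_tendsto] by auto

lemma hat_z_seq_bounds: "pX_hat (z_seq n) \<in> {0..1}" "pY_hat (z_seq n) \<in> {0..1}"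
  using hat_bounds(1,2)[OF z_seq_bounds(1) less_imp_le[OF z_seq_bounds(2)]] by auto

text \<open>Dividing the kinetic equation by \<open>1 - z\<close> gives an equation for \<open>gen_dq1 (f s)\<close> whose right-hand
  side tends to \<open>alpha1 * M1 (f s)\<close> as \<open>z \<rightarrow> 1\<close>.\<close>

definition first_moment_kernel :: "real \<Rightarrow> real \<Rightarrow> real" where
  "first_moment_kernel z s =
     gen_dq1 (pmf pX) z * gen_dq1 (f s) (pX_hat z) + gen_dq1 (pmf pY) z * gen_dq1 (f s) (pY_hat z)
     - (1 - z) * (gen_dq1 (pmf pX) z * gen_dq1 (f s) (pX_hat z)) * (gen_dq1 (pmf pY) z * gen_dq1 (f s) (pY_hat z))
     - gen_dq1 (f s) z"

lemma f_hat_drift_eq_first_moment_kernel: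
  assumes "0 \<le> s" "0 \<le> z" "z \<le> 1"
  shows "f_hat s (pX_hat z) * f_hat s (pY_hat z) - f_hat s z = - ((1 - z) * first_moment_kernel z s)"
proof -
  have hX: "f_hat s (pX_hat z) = 1 - (1 - z) * (gen_dq1 (pmf pX) z * gen_dq1 (f s) (pX_hat z))"
    using one_minus_f_hat_eq[OF assms(1), of "pX_hat z"] one_minus_hat_eq(1)[OF assms(2,3)] hat_bounds[OF assms(2,3)]
    by (simp add: algebra_simps)
  have hY: "f_hat s (pY_hat z) = 1 - (1 - z) * (gen_dq1 (pmf pY) z * gen_dq1 (f s) (pY_hat z))"
    using one_minus_f_hat_eq[OF assms(1), of "pY_hat z"] one_minus_hat_eq(2)[OF assms(2,3)] hat_bounds[OF assms(2,3)]
    by (simp add: algebra_simps)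
  have hz: "f_hat s z = 1 - (1 - z) * gen_dq1 (f s) z"
    using one_minus_f_hat_eq[OF assms] by simp
  show ?thesis
    unfolding first_moment_kernel_def hz hX hY by (simp add: algebra_simps)
qed

lemma first_moment_kernel_integral:
  assumes "0 \<le> z" "z < 1" "0 \<le> t"
  shows "(first_moment_kernel z has_integral (gen_dq1 (f t) z - gen_dq1 f0 z)) {0..t}"
proof -
  have "((\<lambda>s. - (f_hat s (pX_hat z) * f_hat s (pY_hat z) - f_hat s z) / (1 - z))
          has_integral (- (f_hat t z - f_hat 0 z) / (1 - z))) {0..t}"
    using assms by (intro has_integral_divide has_integral_neg f_hat_integral) auto
  moreover have "- (f_hat t z - f_hat 0 z) / (1 - z) = gen_dq1 (f t) z - gen_dq1 f0 z"
    using one_minus_f_hat_eq[of t z] one_minus_f_hat_eq[of 0 z] assms by (simp add: f_at_0 field_simps)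
  ultimately have "((\<lambda>s. - (f_hat s (pX_hat z) * f_hat s (pY_hat z) - f_hat s z) / (1 - z))
                      has_integral (gen_dq1 (f t) z - gen_dq1 f0 z)) {0..t}"
    by simp
  then show ?thesis
    by (rule has_integral_eq[rotated]) (use assms in \<open>simp add: f_hat_drift_eq_first_moment_kernel\<close>)
qed

lemma first_moment_kernel_bound:
  assumes "0 \<le> s" "s \<le> t" "0 \<le> z" "z \<le> 1"
  defines "B \<equiv> mean_bound t"
  shows "\<bar>first_moment_kernel z s\<bar> \<le> (mX + mY + mX * mY * B + 1) * B"
proof -
  have "M1 (f s) \<le> B"
    unfolding B_def using assms(1,2) by (rule M1_f_le_mean_bound)
  then have "0 \<le> gen_dq1 (f s) w" "gen_dq1 (f s) w \<le> B" if "w \<in> {0..1}" for w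
    using gen_dq1_f_bounds[OF assms(1) that] by auto
  moreover have "z \<in> {0..1}" using assms by simp
  ultimately have G: "0 \<le> gen_dq1 (f s) w" "gen_dq1 (f s) w \<le> B" if "w \<in> {z, pX_hat z, pY_hat z}" for w
    using that hat_bounds[OF assms(3,4)] by auto
  note A = gen_dq1_pmf_bounds[OF assms(3,4)]
  define x y where "x = gen_dq1 (pmf pX) z * gen_dq1 (f s) (pX_hat z)"
    and "y = gen_dq1 (pmf pY) z * gen_dq1 (f s) (pY_hat z)"
  have x: "0 \<le> x" "x \<le> mX * B" and y: "0 \<le> y" "y \<le> mY * B"
    unfolding x_def y_def using A G[of "pX_hat z"] G[of "pY_hat z"] assms by (auto intro: mult_mono)
  have p: "0 \<le> (1 - z) * x * y" "(1 - z) * x * y \<le> (mX * B) * (mY * B)"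
    using x y assms mult_mono[OF x(2) y(2)] mult_left_le_one_le[of "x * y" "1 - z"] means_nonneg
    by (auto simp: mult.assoc)
  have "\<bar>x + y - (1 - z) * x * y - gen_dq1 (f s) z\<bar> \<le> mX * B + mY * B + (mX * B) * (mY * B) + B"
    unfolding abs_le_iff using x y p G[of z, OF insertI1] by linarith
  then show ?thesis
    unfolding first_moment_kernel_def x_def y_def by (simp add: algebra_simps)
qed

lemma first_moment_kernel_tendsto:
  "0 \<le> s \<Longrightarrow> (\<lambda>n. first_moment_kernel (z_seq n) s) \<longlonglongrightarrow> alpha1 * M1 (f s)"
  using tendsto_gen_dq1_at_1[OF prob_density_pmf pX_first_moment z_seq_bounds(3) z_seq_tendsto]
    tendsto_gen_dq1_at_1[OF prob_density_pmf pY_first_moment z_seq_bounds(3) z_seq_tendsto]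
    tendsto_gen_dq1_at_1[OF density_f f_first_moment hat_z_seq_bounds(1) tendsto_hat_z_seq(1)]
    tendsto_gen_dq1_at_1[OF density_f f_first_moment hat_z_seq_bounds(2) tendsto_hat_z_seq(2)]
    tendsto_gen_dq1_at_1[OF density_f f_first_moment z_seq_bounds(3) z_seq_tendsto]
  unfolding first_moment_kernel_def
  by (auto intro!: tendsto_eq_intros z_seq_tendsto simp: algebra_simps)

lemma M1_f_integral:
  assumes "0 \<le> t"
  shows "((\<lambda>s. alpha1 * M1 (f s)) has_integral (M1 (f t) - m0)) {0..t}"
proof (rule has_integral_bounded_limit)
  show "(first_moment_kernel (z_seq n) has_integral (gen_dq1 (f t) (z_seq n) - gen_dq1 f0 (z_seq n))) {0..t}" for n
    using z_seq_bounds assms by (intro first_moment_kernel_integral)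
  show "\<bar>first_moment_kernel (z_seq n) s\<bar> \<le> (mX + mY + mX * mY * mean_bound t + 1) * mean_bound t"
    if "s \<in> {0..t}" for n s
    using that z_seq_bounds[of n] by (intro first_moment_kernel_bound) auto
  show "(\<lambda>n. first_moment_kernel (z_seq n) s) \<longlonglongrightarrow> alpha1 * M1 (f s)" if "s \<in> {0..t}" for s
    using that by (intro first_moment_kernel_tendsto) auto
  show "(\<lambda>n. gen_dq1 (f t) (z_seq n) - gen_dq1 f0 (z_seq n)) \<longlonglongrightarrow> M1 (f t) - m0"
    using assms
    by (intro tendsto_diff tendsto_gen_dq1_at_1 z_seq_bounds z_seq_tendsto density_f f_first_moment
        density_f0 f0_first_moment)
qed

lemma M1_f_eq: "0 \<le> t \<Longrightarrow> M1 (f t) = m0 * exp (alpha1 * t)"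
  by (rule integral_equation_unique[where h = "\<lambda>_. 0"])
     (auto simp: M1_f_integral intro!: derivative_eq_intros continuous_intros)

subsection \<open>The second moment\<close>

text \<open>Stated with the closed form of \<open>M1 (f s)\<close>, so that it is differentiable in \<open>s\<close>.\<close>

definition second_order_gap :: "real \<Rightarrow> real \<Rightarrow> real" where
  "second_order_gap s z = (1 - z) * (m0 * exp (alpha1 * s)) - (1 - f_hat s z)"

lemma second_order_gap_eq: "0 \<le> s \<Longrightarrow> second_order_gap s z = (1 - z) * M1 (f s) - (1 - f_hat s z)"
  unfolding second_order_gap_def by (simp add: M1_f_eq)

lemma second_order_gap_bounds:
  assumes "0 \<le> s" "0 \<le> w" "w \<le> 1"
  shows "0 \<le> second_order_gap s w" "second_order_gap s w \<le> (1 - w) * M1 (f s)"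
  using one_minus_gen_fun_le[OF density_f f_first_moment, of s w] gen_fun_bounds[OF density_f, of s w] assms
  by (auto simp: second_order_gap_eq)

lemma second_order_gap_has_derivative:
  assumes "0 \<le> z" "z \<le> 1" "0 < s"
  shows "((\<lambda>s. second_order_gap s z) has_real_derivative
           (1 - z) * alpha1 * M1 (f s) + (f_hat s (pX_hat z) * f_hat s (pY_hat z) - f_hat s z)) (at s)"
proof -
  have "((\<lambda>s. second_order_gap s z) has_real_derivative
           (1 - z) * (m0 * (exp (alpha1 * s) * alpha1)) - (0 - (f_hat s (pX_hat z) * f_hat s (pY_hat z) - f_hat s z))) (at s)"
    unfolding second_order_gap_def using assms by (auto intro!: derivative_eq_intros f_hat_has_derivative)
  then show ?thesis
    using M1_f_eq[of s] assms by (simp add: algebra_simps)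
qed

lemma hat_second_order_eq:
  assumes "0 \<le> z" "z \<le> 1"
  shows "(1 - z) * mX - (1 - pX_hat z) = (1 - z)^2 * gen_dq2 (pmf pX) z"
    and "(1 - z) * mY - (1 - pY_hat z) = (1 - z)^2 * gen_dq2 (pmf pY) z"
  using second_order_gen_fun_eq[OF prob_density_pmf pX_first_moment assms]
    second_order_gen_fun_eq[OF prob_density_pmf pY_first_moment assms] by auto

lemma gen_dq2_pmf_bounds:
  assumes "0 \<le> z" "z \<le> 1"
  shows "0 \<le> gen_dq2 (pmf pX) z" "gen_dq2 (pmf pX) z \<le> gen_dq2 (pmf pX) 1"
    and "0 \<le> gen_dq2 (pmf pY) z" "gen_dq2 (pmf pY) z \<le> gen_dq2 (pmf pY) 1"
  using gen_dq2_nonneg[OF prob_density_pmf pX_second_moment] gen_dq2_le[OF prob_density_pmf pX_second_moment]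
    gen_dq2_nonneg[OF prob_density_pmf pY_second_moment] gen_dq2_le[OF prob_density_pmf pY_second_moment]
    assms by auto

text \<open>The derivative of the gap at \<open>z\<close> is controlled by the gaps at \<open>pX_hat z\<close> and \<open>pY_hat z\<close>, which are
  closer to 1 by the factors \<open>mX\<close> and \<open>mY\<close>; this is what makes the gap of order \<open>(1 - z)^2\<close>.\<close>

lemma second_order_gap_drift_decomposition:
  assumes "0 \<le> s"
  shows "(1 - z) * alpha1 * M1 (f s) + (f_hat s (pX_hat z) * f_hat s (pY_hat z) - f_hat s z)
     = ((1 - z) * mX - (1 - pX_hat z)) * M1 (f s) + ((1 - z) * mY - (1 - pY_hat z)) * M1 (f s)
       + second_order_gap s (pX_hat z) + second_order_gap s (pY_hat z)
       + (1 - f_hat s (pX_hat z)) * (1 - f_hat s (pY_hat z)) - second_order_gap s z"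
  unfolding second_order_gap_eq[OF assms] by (simp add: algebra_simps)

text \<open>\<open>gap_const T\<close> dominates the initial gap and the source terms of the drift, and \<open>gap_rate\<close> its
  transport terms, on the time interval \<open>[0, T]\<close>.\<close>

definition gap_const :: "real \<Rightarrow> real" where
  "gap_const T = gen_dq2 f0 1 + (gen_dq2 (pmf pX) 1 + gen_dq2 (pmf pY) 1) * mean_bound T
                 + mX * mY * (mean_bound T)^2"

abbreviation "gap_rate \<equiv> mX^2 + mY^2 + 1"

lemma gap_const_ge_initial: "gen_dq2 f0 1 \<le> gap_const T"
  using gen_dq2_pmf_bounds[of 1] mean_bound_nonneg[of T] means_nonneg unfolding gap_const_def by auto

lemma gap_const_ge: "(gen_dq2 (pmf pX) 1 + gen_dq2 (pmf pY) 1) * mean_bound T + mX * mY * (mean_bound T)^2 \<le> gap_const T"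
  using gen_dq2_nonneg[OF density_f0 f0_second_moment, of 1] unfolding gap_const_def by auto

lemma gap_const_nonneg: "0 \<le> gap_const T"
  using gap_const_ge_initial[of T] gen_dq2_nonneg[OF density_f0 f0_second_moment, of 1] by simp

lemma second_order_drift_le:
  assumes "0 \<le> u" "u \<le> T" "0 \<le> z" "z \<le> 1" "gap_const T \<le> R"
    and gap_le: "\<And>w. 0 \<le> w \<Longrightarrow> w \<le> 1 \<Longrightarrow> second_order_gap u w \<le> (1 - w)^2 * R + E"
  shows "(1 - z) * alpha1 * M1 (f u) + (f_hat u (pX_hat z) * f_hat u (pY_hat z) - f_hat u z)
           \<le> (1 - z)^2 * (gap_rate * R) + 2 * E"
proof -
  let ?a = "pX_hat z" and ?b = "pY_hat z" and ?M = "M1 (f u)" and ?B = "mean_bound T"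
  have M: "0 \<le> ?M" "?M \<le> ?B"
    using M1_nonneg[OF density_f f_first_moment] M1_f_le_mean_bound assms by auto
  note hat = hat_bounds[OF assms(3,4)] and dq2 = gen_dq2_pmf_bounds[OF assms(3,4)]
  have R: "0 \<le> R"
    using gap_const_nonneg[of T] assms(5) by simp
  have "((1 - z) * mX - (1 - ?a)) * ?M \<le> (1 - z)^2 * (gen_dq2 (pmf pX) 1 * ?B)"
    unfolding hat_second_order_eq[OF assms(3,4)] mult.assoc using M dq2
    by (intro mult_left_mono mult_mono) auto
  moreover have "((1 - z) * mY - (1 - ?b)) * ?M \<le> (1 - z)^2 * (gen_dq2 (pmf pY) 1 * ?B)"
    unfolding hat_second_order_eq[OF assms(3,4)] mult.assoc using M dq2
    by (intro mult_left_mono mult_mono) auto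
  moreover have "(1 - ?a)^2 \<le> ((1 - z) * mX)^2" "(1 - ?b)^2 \<le> ((1 - z) * mY)^2"
    using hat by (auto intro!: power_mono)
  then have "second_order_gap u ?a \<le> (1 - z)^2 * (mX^2 * R) + E"
    and "second_order_gap u ?b \<le> (1 - z)^2 * (mY^2 * R) + E"
    using gap_le[of ?a] gap_le[of ?b] hat mult_right_mono[OF _ R]
    by (fastforce simp: power_mult_distrib mult_ac)+
  moreover have "(1 - f_hat u ?a) * (1 - f_hat u ?b) \<le> ((1 - z) * mX * ?B) * ((1 - z) * mY * ?B)"
  proof (rule mult_mono)
    show "1 - f_hat u ?a \<le> (1 - z) * mX * ?B"
      using one_minus_gen_fun_le[OF density_f f_first_moment, of u ?a] hat M assms(1)
        mult_mono[of "1 - ?a" "(1 - z) * mX" ?M ?B] by auto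
    show "1 - f_hat u ?b \<le> (1 - z) * mY * ?B"
      using one_minus_gen_fun_le[OF density_f f_first_moment, of u ?b] hat M assms(1)
        mult_mono[of "1 - ?b" "(1 - z) * mY" ?M ?B] by auto
  qed (use gen_fun_bounds[OF density_f] hat assms mean_bound_nonneg[of T] means_nonneg in auto)
  moreover have "0 \<le> second_order_gap u z"
    using second_order_gap_bounds assms by auto
  moreover have "(1 - z)^2 * ((gen_dq2 (pmf pX) 1 + gen_dq2 (pmf pY) 1) * ?B + mX * mY * ?B^2) \<le> (1 - z)^2 * R"
    using gap_const_ge[of T] assms(5) by (intro mult_left_mono) auto
  ultimately show ?thesis
    unfolding second_order_gap_drift_decomposition[OF assms(1)]
    by (simp add: algebra_simps power2_eq_square)
qed

lemma second_order_gap_initial_le: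
  assumes "0 \<le> z" "z \<le> 1"
  shows "second_order_gap 0 z \<le> (1 - z)^2 * gap_const T"
proof -
  have "second_order_gap 0 z = (1 - z)^2 * gen_dq2 f0 z"
    using second_order_gen_fun_eq[OF density_f0 f0_first_moment assms] by (simp add: second_order_gap_eq f_at_0)
  also have "\<dots> \<le> (1 - z)^2 * gap_const T"
    using gen_dq2_le[OF density_f0 f0_second_moment assms] gap_const_ge_initial[of T] by (intro mult_left_mono) auto
  finally show ?thesis .
qed

lemma second_order_gap_le_with_remainder:
  "0 \<le> s \<Longrightarrow> s \<le> T \<Longrightarrow> 0 \<le> z \<Longrightarrow> z \<le> 1 \<Longrightarrow>
     second_order_gap s z \<le> (1 - z)^2 * (gap_const T * exp (gap_rate * s)) + mean_bound T * exp_term n (2 * s)"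
proof (induction n arbitrary: s z)
  case 0
  have "second_order_gap s z \<le> (1 - z) * M1 (f s)"
    using second_order_gap_bounds(2) 0 by auto
  also have "\<dots> \<le> 1 * mean_bound T"
    using M1_f_le_mean_bound[of s T] M1_nonneg[OF density_f f_first_moment, of s] mean_bound_nonneg 0
    by (intro mult_mono) auto
  moreover have "0 \<le> (1 - z)^2 * (gap_const T * exp (gap_rate * s))"
    using gap_const_nonneg[of T] by simp
  ultimately show ?case
    by (simp add: exp_term_def)
next
  case (Suc n)
  define d where "d u = (1 - z)^2 * (gap_const T * exp (gap_rate * u)) + mean_bound T * exp_term (Suc n) (2 * u)
                        - second_order_gap u z" for u
  have "d 0 \<le> d s"
  proof (rule DERIV_nonneg_imp_increasing_open[OF \<open>0 \<le> s\<close>])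
    show "continuous_on {0..s} d"
      unfolding d_def second_order_gap_def
      by (intro continuous_intros continuous_on_subset[OF continuous_on_f_hat]) (use Suc.prems in auto)
    fix u assume u: "0 < u" "u < s"
    let ?R = "gap_const T * exp (gap_rate * u)"
    have "(d has_real_derivative (1 - z)^2 * (gap_const T * (exp (gap_rate * u) * gap_rate))
             + mean_bound T * (exp_term n (2 * u) * 2)
             - ((1 - z) * alpha1 * M1 (f u) + (f_hat u (pX_hat z) * f_hat u (pY_hat z) - f_hat u z))) (at u)"
      unfolding d_def using Suc.prems u
      by (auto intro!: derivative_eq_intros second_order_gap_has_derivative)
    moreover have "(1 - z) * alpha1 * M1 (f u) + (f_hat u (pX_hat z) * f_hat u (pY_hat z) - f_hat u z)
                     \<le> (1 - z)^2 * (gap_rate * ?R) + 2 * (mean_bound T * exp_term n (2 * u))"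
    proof (rule second_order_drift_le)
      show "gap_const T \<le> ?R"
        using gap_const_nonneg[of T] u
        by (intro mult_le_cancel_left1[THEN iffD2]) (auto simp: add_nonneg_nonneg)
    qed (use Suc u in auto)
    ultimately show "\<exists>d'. (d has_real_derivative d') (at u) \<and> 0 \<le> d'"
      by (intro exI conjI) (auto simp: algebra_simps)
  qed
  moreover have "second_order_gap 0 z \<le> (1 - z)^2 * gap_const T"
    using Suc.prems by (intro second_order_gap_initial_le) auto
  ultimately show ?case
    unfolding d_def by (simp add: exp_term_def)
qed

lemma second_order_gap_le:
  assumes "0 \<le> s" "s \<le> T" "0 \<le> z" "z \<le> 1"
  shows "second_order_gap s z \<le> (1 - z)^2 * (gap_const T * exp (gap_rate * s))"
  by (rule le_of_le_plus_exp_term[of _ _ "mean_bound T" "2 * s"])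
     (rule second_order_gap_le_with_remainder[OF assms])

lemma M2_f_le:
  assumes "0 \<le> s" "s \<le> T"
  shows "summable (\<lambda>v. (real v)^2 * f s v)" and "M2 (f s) - M1 (f s) \<le> 2 * (gap_const T * exp (gap_rate * s))"
  using M2_le_of_gen_fun_bound[OF density_f f_first_moment, of s "gap_const T * exp (gap_rate * s)"]
    second_order_gap_le[OF assms] assms by (auto simp: second_order_gap_eq)

lemma f_second_moment: "0 \<le> s \<Longrightarrow> summable (\<lambda>v. (real v)^2 * f s v)"
  using M2_f_le(1)[of s s] by simp

definition second_moment_bound :: "real \<Rightarrow> real" where
  "second_moment_bound T = gap_const T * exp (gap_rate * T)"

lemma gen_dq2_f_bounds:
  assumes "0 \<le> s" "s \<le> T" "w \<in> {0..1}"
  shows "0 \<le> gen_dq2 (f s) w" "gen_dq2 (f s) w \<le> second_moment_bound T"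
proof -
  show "0 \<le> gen_dq2 (f s) w"
    using gen_dq2_nonneg[OF density_f f_second_moment] assms by auto
  have "gen_dq2 (f s) w \<le> gen_dq2 (f s) 1"
    using gen_dq2_le[OF density_f f_second_moment] assms by auto
  also have "\<dots> \<le> gap_const T * exp (gap_rate * s)"
    using M2_f_le(2)[OF assms(1,2)] gen_dq2_at_1[OF density_f f_second_moment, of s] assms by simp
  also have "\<dots> \<le> second_moment_bound T"
    unfolding second_moment_bound_def
    using gap_const_nonneg[of T] assms
    by (intro mult_left_mono) (auto intro!: mult_left_mono add_nonneg_nonneg)
  finally show "gen_dq2 (f s) w \<le> second_moment_bound T" .
qed

lemma second_order_gap_eq_gen_dq2:
  "0 \<le> s \<Longrightarrow> 0 \<le> w \<Longrightarrow> w \<le> 1 \<Longrightarrow> second_order_gap s w = (1 - w)^2 * gen_dq2 (f s) w"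
  using second_order_gen_fun_eq[OF density_f f_first_moment] by (simp add: second_order_gap_eq)

definition second_moment_kernel :: "real \<Rightarrow> real \<Rightarrow> real" where
  "second_moment_kernel z s =
     gen_dq2 (pmf pX) z * M1 (f s) + gen_dq2 (pmf pY) z * M1 (f s)
     + (gen_dq1 (pmf pX) z)^2 * gen_dq2 (f s) (pX_hat z) + (gen_dq1 (pmf pY) z)^2 * gen_dq2 (f s) (pY_hat z)
     + (gen_dq1 (pmf pX) z * gen_dq1 (f s) (pX_hat z)) * (gen_dq1 (pmf pY) z * gen_dq1 (f s) (pY_hat z))
     - gen_dq2 (f s) z"

lemma gap_drift_eq_second_moment_kernel:
  assumes "0 \<le> s" "0 \<le> z" "z \<le> 1"
  shows "(1 - z) * alpha1 * M1 (f s) + (f_hat s (pX_hat z) * f_hat s (pY_hat z) - f_hat s z)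
           = (1 - z)^2 * second_moment_kernel z s"
proof -
  note hat = hat_bounds[OF assms(2,3)] and one_minus = one_minus_hat_eq[OF assms(2,3)]
  have "second_order_gap s (pX_hat z) = (1 - z)^2 * ((gen_dq1 (pmf pX) z)^2 * gen_dq2 (f s) (pX_hat z))"
    "second_order_gap s (pY_hat z) = (1 - z)^2 * ((gen_dq1 (pmf pY) z)^2 * gen_dq2 (f s) (pY_hat z))"
    using second_order_gap_eq_gen_dq2[OF assms(1)] hat one_minus by (auto simp: power_mult_distrib)
  moreover have "(1 - f_hat s (pX_hat z)) * (1 - f_hat s (pY_hat z))
    = (1 - z)^2 * ((gen_dq1 (pmf pX) z * gen_dq1 (f s) (pX_hat z)) * (gen_dq1 (pmf pY) z * gen_dq1 (f s) (pY_hat z)))"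
    using one_minus_f_hat_eq[OF assms(1)] hat one_minus by (simp add: power2_eq_square mult_ac)
  ultimately show ?thesis
    unfolding second_order_gap_drift_decomposition[OF assms(1)] hat_second_order_eq[OF assms(2,3)]
      second_order_gap_eq_gen_dq2[OF assms] second_moment_kernel_def
    by (simp add: algebra_simps)
qed

lemma second_moment_kernel_integral:
  assumes "0 \<le> z" "z < 1" "0 \<le> t"
  shows "(second_moment_kernel z has_integral (gen_dq2 (f t) z - gen_dq2 f0 z)) {0..t}"
proof -
  let ?drift = "\<lambda>s. (1 - z) * alpha1 * M1 (f s) + (f_hat s (pX_hat z) * f_hat s (pY_hat z) - f_hat s z)"
  have "(?drift has_integral (second_order_gap t z - second_order_gap 0 z)) {0..t}"
  proof (rule fundamental_theorem_of_calculus_interior[OF assms(3)])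
    show "continuous_on {0..t} (\<lambda>s. second_order_gap s z)"
      unfolding second_order_gap_def using assms
      by (intro continuous_intros continuous_on_subset[OF continuous_on_f_hat]) auto
  qed (use second_order_gap_has_derivative assms in \<open>auto simp: has_real_derivative_iff_has_vector_derivative\<close>)
  then have "(?drift has_integral ((1 - z)^2 * (gen_dq2 (f t) z - gen_dq2 f0 z))) {0..t}"
    using assms by (simp add: second_order_gap_eq_gen_dq2 f_at_0 right_diff_distrib)
  from has_integral_divide[OF this, of "(1 - z)^2"]
  have "((\<lambda>s. ?drift s / (1 - z)^2) has_integral (gen_dq2 (f t) z - gen_dq2 f0 z)) {0..t}"
    using assms by simp
  then show ?thesis
    by (rule has_integral_eq[rotated]) (use assms in \<open>simp add: gap_drift_eq_second_moment_kernel\<close>)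
qed

lemma second_moment_kernel_bound:
  assumes "0 \<le> s" "s \<le> t" "0 \<le> z" "z \<le> 1"
  defines "B \<equiv> mean_bound t" and "S \<equiv> second_moment_bound t"
  shows "\<bar>second_moment_kernel z s\<bar>
           \<le> (gen_dq2 (pmf pX) 1 + gen_dq2 (pmf pY) 1) * B + (mX^2 + mY^2) * S + (mX * B) * (mY * B) + S"
proof -
  note hat = hat_bounds[OF assms(3,4)] and dq1 = gen_dq1_pmf_bounds[OF assms(3,4)]
    and dq2 = gen_dq2_pmf_bounds[OF assms(3,4)]
  have M: "0 \<le> M1 (f s)" "M1 (f s) \<le> B"
    unfolding B_def using M1_nonneg[OF density_f f_first_moment] M1_f_le_mean_bound assms by auto
  have "z \<in> {0..1}" using assms by simp
  then have G1: "0 \<le> gen_dq1 (f s) w" "gen_dq1 (f s) w \<le> B"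
    and G2: "0 \<le> gen_dq2 (f s) w" "gen_dq2 (f s) w \<le> S" if "w \<in> {z, pX_hat z, pY_hat z}" for w
    using that hat gen_dq1_f_bounds[OF assms(1), of w] gen_dq2_f_bounds[OF assms(1,2), of w] M
    unfolding S_def by auto
  have "0 \<le> gen_dq2 (pmf pX) z * M1 (f s) + gen_dq2 (pmf pY) z * M1 (f s)"
    "gen_dq2 (pmf pX) z * M1 (f s) + gen_dq2 (pmf pY) z * M1 (f s) \<le> (gen_dq2 (pmf pX) 1 + gen_dq2 (pmf pY) 1) * B"
    using dq2 M by (auto simp: distrib_right intro!: add_mono mult_mono)
  moreover have "0 \<le> (gen_dq1 (pmf pX) z)^2 * gen_dq2 (f s) (pX_hat z) + (gen_dq1 (pmf pY) z)^2 * gen_dq2 (f s) (pY_hat z)"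
    "(gen_dq1 (pmf pX) z)^2 * gen_dq2 (f s) (pX_hat z) + (gen_dq1 (pmf pY) z)^2 * gen_dq2 (f s) (pY_hat z) \<le> (mX^2 + mY^2) * S"
    using dq1 G2[of "pX_hat z"] G2[of "pY_hat z"]
    by (auto simp: distrib_right intro!: add_mono mult_mono power_mono)
  moreover have "0 \<le> (gen_dq1 (pmf pX) z * gen_dq1 (f s) (pX_hat z)) * (gen_dq1 (pmf pY) z * gen_dq1 (f s) (pY_hat z))"
    "(gen_dq1 (pmf pX) z * gen_dq1 (f s) (pX_hat z)) * (gen_dq1 (pmf pY) z * gen_dq1 (f s) (pY_hat z)) \<le> (mX * B) * (mY * B)"
    using dq1 G1[of "pX_hat z"] G1[of "pY_hat z"] means_nonneg by (auto intro!: mult_mono)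
  moreover note G2[of z, OF insertI1]
  ultimately show ?thesis
    unfolding second_moment_kernel_def abs_le_iff by linarith
qed

lemma second_moment_kernel_tendsto:
  assumes "0 \<le> s"
  shows "(\<lambda>n. second_moment_kernel (z_seq n) s) \<longlonglongrightarrow>
           alpha2 * gen_dq2 (f s) 1 + (gen_dq2 (pmf pX) 1 + gen_dq2 (pmf pY) 1) * M1 (f s) + mX * mY * (M1 (f s))^2"
proof -
  note dq1 = tendsto_gen_dq1_at_1[OF _ _ _ z_seq_tendsto] tendsto_gen_dq1_at_1[OF _ _ hat_z_seq_bounds(1) tendsto_hat_z_seq(1)]
    tendsto_gen_dq1_at_1[OF _ _ hat_z_seq_bounds(2) tendsto_hat_z_seq(2)]
  note dq2 = tendsto_gen_dq2_at_1[OF _ _ _ z_seq_tendsto] tendsto_gen_dq2_at_1[OF _ _ hat_z_seq_bounds(1) tendsto_hat_z_seq(1)]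
    tendsto_gen_dq2_at_1[OF _ _ hat_z_seq_bounds(2) tendsto_hat_z_seq(2)]
  have "(\<lambda>n. second_moment_kernel (z_seq n) s) \<longlonglongrightarrow>
          gen_dq2 (pmf pX) 1 * M1 (f s) + gen_dq2 (pmf pY) 1 * M1 (f s)
          + mX^2 * gen_dq2 (f s) 1 + mY^2 * gen_dq2 (f s) 1 + (mX * M1 (f s)) * (mY * M1 (f s)) - gen_dq2 (f s) 1"
    unfolding second_moment_kernel_def
    by (intro tendsto_intros dq1 dq2 prob_density_pmf pX_first_moment pY_first_moment pX_second_moment
        pY_second_moment density_f f_first_moment f_second_moment z_seq_bounds assms)
  then show ?thesis
    by (simp add: algebra_simps power2_eq_square)
qed

lemma gen_dq2_f_integral:
  assumes "0 \<le> t"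
  shows "((\<lambda>s. alpha2 * gen_dq2 (f s) 1 + (gen_dq2 (pmf pX) 1 + gen_dq2 (pmf pY) 1) * M1 (f s)
             + mX * mY * (M1 (f s))^2) has_integral (gen_dq2 (f t) 1 - gen_dq2 f0 1)) {0..t}"
proof (rule has_integral_bounded_limit)
  show "(second_moment_kernel (z_seq n) has_integral (gen_dq2 (f t) (z_seq n) - gen_dq2 f0 (z_seq n))) {0..t}" for n
    using z_seq_bounds assms by (intro second_moment_kernel_integral)
  show "\<bar>second_moment_kernel (z_seq n) s\<bar> \<le> (gen_dq2 (pmf pX) 1 + gen_dq2 (pmf pY) 1) * mean_bound t
          + (mX^2 + mY^2) * second_moment_bound t + (mX * mean_bound t) * (mY * mean_bound t) + second_moment_bound t"
    if "s \<in> {0..t}" for n s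
    using that z_seq_bounds[of n] by (intro second_moment_kernel_bound) auto
  show "(\<lambda>n. second_moment_kernel (z_seq n) s) \<longlonglongrightarrow> alpha2 * gen_dq2 (f s) 1
          + (gen_dq2 (pmf pX) 1 + gen_dq2 (pmf pY) 1) * M1 (f s) + mX * mY * (M1 (f s))^2" if "s \<in> {0..t}" for s
    using that by (intro second_moment_kernel_tendsto) auto
  show "(\<lambda>n. gen_dq2 (f t) (z_seq n) - gen_dq2 f0 (z_seq n)) \<longlonglongrightarrow> gen_dq2 (f t) 1 - gen_dq2 f0 1"
    using assms
    by (intro tendsto_diff tendsto_gen_dq2_at_1 z_seq_bounds z_seq_tendsto density_f f_second_moment
        density_f0 f0_second_moment)
qed

abbreviation "beta \<equiv> (M2 (pmf pX) - mX^2) + (M2 (pmf pY) - mY^2)"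
abbreviation "gamma \<equiv> mX * mY"

lemma M2_f_eq_gen_dq2: "0 \<le> s \<Longrightarrow> M2 (f s) = 2 * gen_dq2 (f s) 1 + M1 (f s)"
  using gen_dq2_at_1[OF density_f f_second_moment] by simp

lemma gen_dq2_pmf_at_1_sum: "2 * (gen_dq2 (pmf pX) 1 + gen_dq2 (pmf pY) 1) + alpha1 = alpha2 + beta"
proof -
  have "2 * (gen_dq2 (pmf pX) 1 + gen_dq2 (pmf pY) 1) + alpha1
          = 2 * gen_dq2 (pmf pX) 1 + 2 * gen_dq2 (pmf pY) 1 + alpha1"
    by (simp only: distrib_left)
  also have "\<dots> = (M2 (pmf pX) - mX) + (M2 (pmf pY) - mY) + alpha1"
    by (simp only: gen_dq2_at_1[OF prob_density_pmf pX_second_moment]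
        gen_dq2_at_1[OF prob_density_pmf pY_second_moment])
  finally show ?thesis by simp
qed

lemma M2_f_integral:
  assumes "0 \<le> t"
  shows "((\<lambda>s. alpha2 * M2 (f s) + (beta * M1 (f s) + 2 * gamma * (M1 (f s))^2))
            has_integral (M2 (f t) - M2 f0)) {0..t}"
proof -
  have integrand: "2 * (alpha2 * gen_dq2 (f s) 1 + (gen_dq2 (pmf pX) 1 + gen_dq2 (pmf pY) 1) * M1 (f s)
                     + mX * mY * (M1 (f s))^2) + alpha1 * M1 (f s)
                   = alpha2 * M2 (f s) + (beta * M1 (f s) + 2 * gamma * (M1 (f s))^2)" if "0 \<le> s" for s
  proof -
    have "2 * (alpha2 * gen_dq2 (f s) 1 + (gen_dq2 (pmf pX) 1 + gen_dq2 (pmf pY) 1) * M1 (f s)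
            + mX * mY * (M1 (f s))^2) + alpha1 * M1 (f s)
          = alpha2 * (2 * gen_dq2 (f s) 1) + (2 * (gen_dq2 (pmf pX) 1 + gen_dq2 (pmf pY) 1) + alpha1) * M1 (f s)
            + 2 * gamma * (M1 (f s))^2"
      by (simp only: algebra_simps)
    also have "\<dots> = alpha2 * (2 * gen_dq2 (f s) 1 + M1 (f s)) + (beta * M1 (f s) + 2 * gamma * (M1 (f s))^2)"
      unfolding gen_dq2_pmf_at_1_sum by (simp only: algebra_simps)
    finally show ?thesis
      unfolding M2_f_eq_gen_dq2[OF that] .
  qed
  have "((\<lambda>s. 2 * (alpha2 * gen_dq2 (f s) 1 + (gen_dq2 (pmf pX) 1 + gen_dq2 (pmf pY) 1) * M1 (f s)
             + mX * mY * (M1 (f s))^2) + alpha1 * M1 (f s))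
          has_integral (2 * (gen_dq2 (f t) 1 - gen_dq2 f0 1) + (M1 (f t) - m0))) {0..t}"
    by (intro has_integral_add has_integral_mult_right gen_dq2_f_integral M1_f_integral assms)
  moreover have "2 * (gen_dq2 (f t) 1 - gen_dq2 f0 1) + (M1 (f t) - m0) = M2 (f t) - M2 f0"
    using M2_f_eq_gen_dq2[OF assms] gen_dq2_at_1[OF density_f0 f0_second_moment] by simp
  ultimately have "((\<lambda>s. 2 * (alpha2 * gen_dq2 (f s) 1 + (gen_dq2 (pmf pX) 1 + gen_dq2 (pmf pY) 1) * M1 (f s)
             + mX * mY * (M1 (f s))^2) + alpha1 * M1 (f s)) has_integral (M2 (f t) - M2 f0)) {0..t}"
    by (simp only:)
  then show ?thesis
    by (rule has_integral_eq[rotated]) (rule integrand, simp)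
qed

lemma M2_f_eq:
  assumes "0 \<le> t"
  shows "M2 (f t) = M2 f0 * exp (alpha2 * t) + beta * m0 * exp_dd alpha1 alpha2 t
                    + 2 * gamma * m0^2 * exp_dd (2 * alpha1) alpha2 t"
proof (rule integral_equation_unique[where c = alpha2 and y_init = "M2 f0" and y = "\<lambda>t. M2 (f t)" and T = t
         and h = "\<lambda>s. beta * (m0 * exp (alpha1 * s)) + 2 * gamma * (m0 * exp (alpha1 * s))^2"])
  show "((\<lambda>s. alpha2 * M2 (f s) + (beta * (m0 * exp (alpha1 * s)) + 2 * gamma * (m0 * exp (alpha1 * s))^2))
           has_integral (M2 (f t) - M2 f0)) {0..t}" if "0 \<le> t" for t
    using M2_f_integral[OF that] by (rule has_integral_eq[rotated]) (simp add: M1_f_eq)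
  fix t :: real
  have "((\<lambda>t. M2 f0 * exp (alpha2 * t) + beta * m0 * exp_dd alpha1 alpha2 t + 2 * gamma * m0^2 * exp_dd (2 * alpha1) alpha2 t)
          has_real_derivative M2 f0 * (exp (alpha2 * t) * alpha2) + beta * m0 * (alpha2 * exp_dd alpha1 alpha2 t + exp (alpha1 * t))
            + 2 * gamma * m0^2 * (alpha2 * exp_dd (2 * alpha1) alpha2 t + exp (2 * alpha1 * t))) (at t)"
    by (intro DERIV_add DERIV_cmult exp_dd_has_derivative) (auto intro!: derivative_eq_intros)
  moreover have "(m0 * exp (alpha1 * t))^2 = m0^2 * exp (2 * alpha1 * t)"
    by (simp add: power_mult_distrib power2_eq_square exp_add[symmetric])
  ultimately show "((\<lambda>t. M2 f0 * exp (alpha2 * t) + beta * m0 * exp_dd alpha1 alpha2 t + 2 * gamma * m0^2 * exp_dd (2 * alpha1) alpha2 t)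
          has_real_derivative alpha2 * (M2 f0 * exp (alpha2 * t) + beta * m0 * exp_dd alpha1 alpha2 t
            + 2 * gamma * m0^2 * exp_dd (2 * alpha1) alpha2 t)
          + (beta * (m0 * exp (alpha1 * t)) + 2 * gamma * (m0 * exp (alpha1 * t))^2)) (at t)"
    by (simp only: algebra_simps)
qed (auto intro!: continuous_intros continuous_on_exp_dd simp: exp_dd_0 assms)

lemma Var_f_eq:
  assumes "0 \<le> t"
  shows "Var (f t) = M2 f0 * exp (alpha2 * t) - m0^2 * exp (2 * alpha1 * t)
                     + beta * m0 * exp_dd alpha1 alpha2 t + 2 * gamma * m0^2 * exp_dd (2 * alpha1) alpha2 t"
proof -
  have "(M1 (f t))^2 = m0^2 * exp (2 * alpha1 * t)"
    using M1_f_eq[OF assms] by (simp add: power_mult_distrib power2_eq_square exp_add[symmetric])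
  then show ?thesis
    unfolding Var_def M2_f_eq[OF assms] by simp
qed

end

theorem proposition3p6:
  fixes pX pY :: "nat pmf" and f0 :: "nat \<Rightarrow> real" and f :: "real \<Rightarrow> nat \<Rightarrow> real"
    and m0 t :: real
  assumes "pmf pX 0 \<noteq> 1" and "pmf pY 0 \<noteq> 1"
    and "integrable (measure_pmf pX) (\<lambda>x. (real x)^2)"
    and "integrable (measure_pmf pY) (\<lambda>x. (real x)^2)"
    and "prob_density f0" and "summable (\<lambda>v. (real v)^2 * f0 v)"
    and "m0 = M1 f0"
    and "kinetic_solution pX pY f0 f"
    and "t > 0"
  shows
    "let mX = measure_pmf.expectation pX real; mY = measure_pmf.expectation pY real;
         \<alpha>1 = mX + mY - 1; \<alpha>2 = mX^2 + mY^2 - 1;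
         \<beta> = measure_pmf.variance pX real + measure_pmf.variance pY real;
         \<gamma> = mX * mY
     in Var (f t) =
        M2 f0 * exp (\<alpha>2 * t) - m0^2 * exp (2 * \<alpha>1 * t)
        + \<beta> * m0 * ((if \<alpha>1 \<noteq> \<alpha>2 then (exp (\<alpha>1 * t) - exp (\<alpha>2 * t)) / (\<alpha>1 - \<alpha>2) else 0)
                     + (if \<alpha>1 = \<alpha>2 then t * exp (\<alpha>2 * t) else 0))
        + 2 * \<gamma> * m0^2 * ((if 2 * \<alpha>1 \<noteq> \<alpha>2 then (exp (2 * \<alpha>1 * t) - exp (\<alpha>2 * t)) / (2 * \<alpha>1 - \<alpha>2) else 0)
                     + (if 2 * \<alpha>1 = \<alpha>2 then t * exp (\<alpha>2 * t) else 0))"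
proof -
  interpret kinetic pX pY f0 f
    using assms(3-6,8) by unfold_locales
  show ?thesis
    unfolding Let_def variance_eq_M2_minus_M1[OF assms(3)] variance_eq_M2_minus_M1[OF assms(4)]
    unfolding expectation_eq_M1[OF assms(3)] expectation_eq_M1[OF assms(4)] assms(7)
    using Var_f_eq[of t] assms(9) by (simp add: exp_dd_def)
qed

end
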